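(* Consider the two-type Bellman–Harris process described in the context. Let $H(t),k_1(t),k_2(t)$ be nonnegative functions on $[0,\infty)$ with $\lim_{t\to\infty}k_i(t)=0$ ($i=1,2$) and $\lim_{t\to\infty}H(t)=\infty$. (a) If there exist functions $k_i(t,\lambda_i)$, $i=1,2$, with $k_i(t,\lambda_i)\sim\lambda_ik_i(t)$ as $t\to\infty$ for every fixed $\lambda_i>0$, and $$\lim_{t\to\infty}H(t)\mathbf{Q}(t;1-k_1(t,\lambda_1),1-k_2(t,\lambda_2))=\mathbf{h}(\lambda_1,\lambda_2),\quad\lambda_1,\lambda_2>0,$$ for a function $\mathbf{h}=(h_1,h_2)$ with components continuous in both arguments, then $$\lim_{t\to\infty}H(t)\mathbf{Q}(t;e^{-\lambda_1k_1(t)},e^{-\lambda_2k_2(t)})=\mathbf{h}(\lambda_1,\lambda_2),\quad\lambda_1,\lambda_2>0.$$ (b) If $\lim_{t\to\infty}H(t)\mathbf{Q}(t;1,1-k_2(t,\lambda_2))=\mathbf{h}(\lambda_2)$ for $\lambda_2>0$, for a function $\mathbf{h}(\lambda_2)=(h_1(\lambda_2),h_2(\lambda_2))$ with continuous components (and $k_2(t,\lambda_2)\sim\lambda_2k_2(t)$ for each fixed $\lambda_2>0$), then $\lim_{t\to\infty}H(t)\mathbf{Q}(t;1,e^{-\lambda_2k_2(t)})=\mathbf{h}(\lambda_2)$ for $\lambda_2>0$.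
   Context: Two-type Bellman–Harris branching process $\mathbf{Z}(t)=(Z_1(t),Z_2(t))$ (particles of type $i\in\{1,2\}$ have life-length distribution $G_i$ and offspring generating function $f_i(s_1,s_2)$, and evolve independently). For $\mathbf{s}=(s_1,s_2)\in[0,1]^2$, $F_i(t;\mathbf{s})=\mathbf{E}[s_1^{Z_1(t)}s_2^{Z_2(t)}\mid\text{one initial particle of type }i]$ and $\mathbf{Q}(t;\mathbf{s})=(1-F_1(t;\mathbf{s}),1-F_2(t;\mathbf{s}))^\dagger$. *)

theory Defs
  imports "HOL-Probability.Probability" "HOL-Library.Landau_Symbols"
begin

definition pgf2 :: "(nat \<times> nat) pmf \<Rightarrow> real \<Rightarrow> real \<Rightarrow> real" where
  "pgf2 p s1 s2 = measure_pmf.expectation p (\<lambda>(a, b). s1 ^ a * s2 ^ b)"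

text \<open>Z i t is the law of (Z1(t), Z2(t)) started from one
  particle of type i (i = 1, 2); G i is the life-length distribution of type i (a probability
  measure on [0,\<infinity>)); xi i is the offspring law of type i, with generating function
  f_i = pgf2 (xi i).  The process is characterised by the Bellman--Harris integral equation
  F_i(t;s) = s_i (1 - G_i(t)) + \<integral>_0^t f_i(F(t-u;s)) dG_i(u).\<close>
definition bellman_harris ::
  "(nat \<Rightarrow> real measure) \<Rightarrow> (nat \<Rightarrow> (nat \<times> nat) pmf) \<Rightarrow> (nat \<Rightarrow> real \<Rightarrow> (nat \<times> nat) pmf) \<Rightarrow> bool" where
  "bellman_harris G xi Z \<longleftrightarrow>
     (\<forall>i\<in>{1,2}. prob_space (G i) \<and> sets (G i) = sets borel \<and> measure (G i) {..<0} = 0 \<and>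
       (\<forall>t\<ge>0. \<forall>s1\<in>{0..1}. \<forall>s2\<in>{0..1}.
          set_integrable (G i) {0..t}
            (\<lambda>u. pgf2 (xi i) (pgf2 (Z 1 (t - u)) s1 s2) (pgf2 (Z 2 (t - u)) s1 s2)) \<and>
          pgf2 (Z i t) s1 s2 =
            (if i = 1 then s1 else s2) * measure (G i) {t<..} +
            (LINT u:{0..t}|G i. pgf2 (xi i) (pgf2 (Z 1 (t - u)) s1 s2) (pgf2 (Z 2 (t - u)) s1 s2))))"

definition Qv :: "(nat \<Rightarrow> real \<Rightarrow> (nat \<times> nat) pmf) \<Rightarrow> real \<Rightarrow> real \<Rightarrow> real \<Rightarrow> real \<times> real" where
  "Qv Z t s1 s2 = (1 - pgf2 (Z 1 t) s1 s2, 1 - pgf2 (Z 2 t) s1 s2)"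

end

theory Submission
  imports Defs
begin

(* Only the monotonicity of s |-> F_i(t; s) on the unit square is used.  Since kk(mu, t) ~ mu k(t), k(t) -> 0 and
   1 - exp(-x) = x + O(x^2), for every 0 < d <= 1/2 and large t
     1 - kk(lam (1 + d), t) <= exp(-lam k(t)) <= 1 - kk(lam (1 - d), t).
   As H(t) Q(t; s) is antitone in s, H(t) Q(t; exp(-lam1 k1(t)), exp(-lam2 k2(t))) is eventually
   squeezed between H(t) Q at the perturbed parameters lam_i (1 -+ d_i), whose limits
   h(lam1 (1 -+ d1), lam2 (1 -+ d2)) are close to h(lam1, lam2) by separate continuity:
   first choose d1, then d2. *)

lemma integrable_pgf2_term:
  fixes s1 s2 :: real
  assumes "0 \<le> s1" "s1 \<le> 1" "0 \<le> s2" "s2 \<le> 1"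
  shows "integrable (measure_pmf p) (\<lambda>(a, b). s1 ^ a * s2 ^ b)"
  by (rule measure_pmf.integrable_const_bound[where B=1])
    (use assms in \<open>auto intro!: AE_I2 mult_le_one power_le_one split: prod.split simp: abs_mult\<close>)

lemma pgf2_mono:
  assumes "0 \<le> s1" "s1 \<le> s1'" "s1' \<le> 1" "0 \<le> s2" "s2 \<le> s2'" "s2' \<le> 1"
  shows "pgf2 p s1 s2 \<le> pgf2 p s1' s2'"
  unfolding pgf2_def
proof (rule integral_mono)
  show "integrable (measure_pmf p) (\<lambda>(a, b). s1 ^ a * s2 ^ b)"
    "integrable (measure_pmf p) (\<lambda>(a, b). s1' ^ a * s2' ^ b)"
    using assms by (auto intro!: integrable_pgf2_term)
  show "(case x of (a, b) \<Rightarrow> s1 ^ a * s2 ^ b) \<le> (case x of (a, b) \<Rightarrow> s1' ^ a * s2' ^ b)" for x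
    using assms by (cases x) (auto intro!: mult_mono power_mono)
qed

lemma one_minus_exp_bounds:
  fixes x :: real assumes "0 \<le> x"
  shows "1 - exp (- x) \<le> x" "x - x\<^sup>2 \<le> 1 - exp (- x)"
proof -
  show "1 - exp (- x) \<le> x" using exp_ge_add_one_self[of "- x"] by simp
  have "exp (- x) \<le> 1 / (1 + x)"
    using exp_ge_add_one_self[of x] assms by (simp add: exp_minus divide_simps)
  moreover have "x - x\<^sup>2 \<le> 1 - 1 / (1 + x)"
    using assms by (simp add: field_simps power2_eq_square)
  ultimately show "x - x\<^sup>2 \<le> 1 - exp (- x)" by simp
qed

lemma one_minus_le_exp_if_close:
  fixes a d x :: real
  assumes x: "0 \<le> x" "x \<le> 1/3" and d: "0 < d" "d \<le> 1"
    and close: "\<bar>a - (1 + d) * x\<bar> \<le> d/2 * ((1 + d) * x)"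
  shows "0 \<le> 1 - a" "1 - a \<le> exp (- x)"
proof -
  from close have "(1 + d) * x - d/2 * ((1 + d) * x) \<le> a" "a \<le> (1 + d) * x + d/2 * ((1 + d) * x)"
    by linarith+
  moreover have "(1 + d) * x - d/2 * ((1 + d) * x) = x + d * (1 - d) / 2 * x"
    and "(1 + d) * x + d/2 * ((1 + d) * x) = 3 * x - (1 - d) * (4 + d) / 2 * x"
    by (simp_all add: field_simps)
  moreover have "0 \<le> d * (1 - d) / 2 * x" "0 \<le> (1 - d) * (4 + d) / 2 * x"
    using x d by simp_all
  ultimately have "x \<le> a" "a \<le> 1" using x by linarith+
  then show "0 \<le> 1 - a" "1 - a \<le> exp (- x)"
    using one_minus_exp_bounds(1)[OF x(1)] by linarith+
qed

lemma exp_le_one_minus_if_close: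
  fixes b d x :: real
  assumes x: "0 \<le> x" "x \<le> d/2" and d: "0 < d" "d \<le> 1"
    and close: "\<bar>b - (1 - d) * x\<bar> \<le> d/2 * ((1 - d) * x)"
  shows "0 \<le> b" "exp (- x) \<le> 1 - b"
proof -
  from close have "(1 - d) * x - d/2 * ((1 - d) * x) \<le> b" "b \<le> (1 - d) * x + d/2 * ((1 - d) * x)"
    by linarith+
  moreover have "(1 - d) * x - d/2 * ((1 - d) * x) = (1 - d) * (1 - d/2) * x"
    and "(1 - d) * x + d/2 * ((1 - d) * x) = x - d/2 * x - d * d / 2 * x"
    by (simp_all add: field_simps)
  moreover have "0 \<le> (1 - d) * (1 - d/2) * x" "0 \<le> d * d / 2 * x"
    using x d by simp_all
  moreover have "x * x \<le> d/2 * x" by (rule mult_right_mono[OF x(2) x(1)])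
  ultimately have "0 \<le> b" "b \<le> x - x * x" by linarith+
  then show "0 \<le> b" "exp (- x) \<le> 1 - b"
    using one_minus_exp_bounds(2)[OF x(1)] by (simp_all add: power2_eq_square)
qed

lemma asymp_equiv_eventually_close:
  fixes f g :: "real \<Rightarrow> real"
  assumes "f \<sim>[at_top] g" "0 < c"
  shows "eventually (\<lambda>t. \<bar>f t - g t\<bar> \<le> c * \<bar>g t\<bar>) at_top"
  using landau_o.smallD[OF assms(1)[unfolded asymp_equiv_altdef] assms(2)] by simp

lemma eventually_one_minus_le_exp:
  fixes f x :: "real \<Rightarrow> real"
  assumes equiv: "f \<sim>[at_top] (\<lambda>t. (1 + d) * x t)" and d: "0 < d" "d \<le> 1"
    and x: "(x \<longlongrightarrow> 0) at_top" "eventually (\<lambda>t. 0 \<le> x t) at_top"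
  shows "eventually (\<lambda>t. 0 \<le> 1 - f t \<and> 1 - f t \<le> exp (- x t)) at_top"
proof -
  have "eventually (\<lambda>t. x t < 1/3) at_top" using x(1) by (rule order_tendstoD) simp
  with asymp_equiv_eventually_close[OF equiv half_gt_zero[OF d(1)]] x(2)
  show ?thesis
  proof eventually_elim
    case (elim t)
    then have "\<bar>f t - (1 + d) * x t\<bar> \<le> d/2 * ((1 + d) * x t)"
      using d by (simp add: abs_mult)
    moreover have "x t \<le> 1/3" using elim by simp
    ultimately show ?case
      using one_minus_le_exp_if_close[where a="f t" and x="x t"] elim d by blast
  qed
qed

lemma eventually_exp_le_one_minus:
  fixes f x :: "real \<Rightarrow> real"
  assumes equiv: "f \<sim>[at_top] (\<lambda>t. (1 - d) * x t)" and d: "0 < d" "d \<le> 1"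
    and x: "(x \<longlongrightarrow> 0) at_top" "eventually (\<lambda>t. 0 \<le> x t) at_top"
  shows "eventually (\<lambda>t. 0 \<le> f t \<and> exp (- x t) \<le> 1 - f t) at_top"
proof -
  have "eventually (\<lambda>t. x t < d/2) at_top" using x(1) by (rule order_tendstoD) (use d in simp)
  with asymp_equiv_eventually_close[OF equiv half_gt_zero[OF d(1)]] x(2)
  show ?thesis
  proof eventually_elim
    case (elim t)
    then have "\<bar>f t - (1 - d) * x t\<bar> \<le> d/2 * ((1 - d) * x t)"
      using d by (simp add: abs_mult)
    moreover have "x t \<le> d/2" using elim by simp
    ultimately show ?case
      using exp_le_one_minus_if_close[where b="f t" and x="x t"] elim d by blast
  qed
qed

lemma eventually_one_minus_bracket_exp:
  fixes kk :: "real \<Rightarrow> real \<Rightarrow> real" and k :: "real \<Rightarrow> real"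
  assumes equiv: "\<forall>mu>0. (\<lambda>t. kk mu t) \<sim>[at_top] (\<lambda>t. mu * k t)"
    and k: "(k \<longlongrightarrow> 0) at_top" "eventually (\<lambda>t. 0 \<le> k t) at_top"
    and lam: "0 < lam" and d: "0 < d" "d \<le> 1/2"
  shows "eventually (\<lambda>t. 0 \<le> 1 - kk (lam * (1 + d)) t \<and> 1 - kk (lam * (1 + d)) t \<le> exp (- lam * k t) \<and>
      exp (- lam * k t) \<le> 1 - kk (lam * (1 - d)) t \<and> 1 - kk (lam * (1 - d)) t \<le> 1) at_top"
proof -
  have scaled: "(\<lambda>t. kk (lam * c) t) \<sim>[at_top] (\<lambda>t. c * (lam * k t))" if "0 < c" for c
    using equiv[rule_format, of "lam * c"] lam that by (simp add: mult_ac)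
  have x: "((\<lambda>t. lam * k t) \<longlongrightarrow> 0) at_top" "eventually (\<lambda>t. 0 \<le> lam * k t) at_top"
    using tendsto_mult_right_zero[OF k(1)] k(2) lam by (auto elim: eventually_mono)
  have "eventually (\<lambda>t. 0 \<le> 1 - kk (lam * (1 + d)) t \<and> 1 - kk (lam * (1 + d)) t \<le> exp (- (lam * k t))) at_top"
    using d by (intro eventually_one_minus_le_exp[OF scaled _ _ x]) auto
  moreover have "eventually (\<lambda>t. 0 \<le> kk (lam * (1 - d)) t \<and> exp (- (lam * k t)) \<le> 1 - kk (lam * (1 - d)) t) at_top"
    using d by (intro eventually_exp_le_one_minus[OF scaled _ _ x]) auto
  ultimately show ?thesis by eventually_elim simp
qed

lemma continuous_on_scaled_close:
  fixes f :: "real \<Rightarrow> real"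
  assumes f: "continuous_on {0<..} f" and x: "0 < x" and e: "0 < e" and \<sigma>: "\<bar>\<sigma>\<bar> \<le> 1"
  shows "\<exists>d. 0 < d \<and> d \<le> 1/2 \<and> \<bar>f (x * (1 + \<sigma> * d)) - f x\<bar> < e"
proof -
  have "\<exists>\<delta>>0. \<forall>y\<in>{0<..}. \<bar>y - x\<bar> < \<delta> \<longrightarrow> \<bar>f y - f x\<bar> < e"
    using f x e unfolding continuous_on_iff dist_real_def by simp
  then obtain \<delta> where \<delta>: "0 < \<delta>" "\<And>y. 0 < y \<Longrightarrow> \<bar>y - x\<bar> < \<delta> \<Longrightarrow> \<bar>f y - f x\<bar> < e"
    by auto
  define d where "d = min (1/2) (\<delta> / (2 * x))"
  have d: "0 < d" "d \<le> 1/2" using \<delta> x by (auto simp: d_def)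
  have \<sigma>d: "\<bar>\<sigma> * d\<bar> \<le> d" using \<sigma> d by (simp add: abs_mult mult_left_le_one_le)
  have "x * \<bar>\<sigma> * d\<bar> \<le> x * (\<delta> / (2 * x))"
    using \<sigma>d x by (intro mult_left_mono) (auto simp: d_def)
  also have "\<dots> < \<delta>" using x \<delta> by simp
  finally have close: "\<bar>x * (1 + \<sigma> * d) - x\<bar> < \<delta>"
    using x by (simp add: algebra_simps abs_mult)
  have pos: "0 < x * (1 + \<sigma> * d)" using \<sigma>d d x by (simp add: abs_le_iff)
  show ?thesis using d \<delta>(2)[OF pos close] by blast
qed

lemma separately_continuous_scaled_close:
  fixes \<phi> :: "real \<Rightarrow> real \<Rightarrow> real"
  assumes c1: "\<forall>m2>0. continuous_on {0<..} (\<lambda>m1. \<phi> m1 m2)"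
    and c2: "\<forall>m1>0. continuous_on {0<..} (\<lambda>m2. \<phi> m1 m2)"
    and l: "0 < l1" "0 < l2" and e: "0 < e" and \<sigma>: "\<bar>\<sigma>\<bar> \<le> 1"
  shows "\<exists>d1 d2. d1 \<in> {0<..1/2} \<and> d2 \<in> {0<..1/2} \<and>
           \<bar>\<phi> (l1 * (1 + \<sigma> * d1)) (l2 * (1 + \<sigma> * d2)) - \<phi> l1 l2\<bar> < e"
proof -
  have e2: "0 < e/2" using e by simp
  obtain d1 where d1: "0 < d1" "d1 \<le> 1/2" "\<bar>\<phi> (l1 * (1 + \<sigma> * d1)) l2 - \<phi> l1 l2\<bar> < e/2"
    using continuous_on_scaled_close[OF c1[rule_format, OF l(2)] l(1) e2 \<sigma>] by blast
  have "- d1 \<le> \<sigma> * d1" using mult_right_mono[of "-1" \<sigma> d1] \<sigma> d1 by (simp add: abs_le_iff)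
  then have m1: "0 < l1 * (1 + \<sigma> * d1)" using l d1 by simp
  obtain d2 where d2: "0 < d2" "d2 \<le> 1/2"
    "\<bar>\<phi> (l1 * (1 + \<sigma> * d1)) (l2 * (1 + \<sigma> * d2)) - \<phi> (l1 * (1 + \<sigma> * d1)) l2\<bar> < e/2"
    using continuous_on_scaled_close[OF c2[rule_format, OF m1] l(2) e2 \<sigma>] by blast
  have "\<bar>\<phi> (l1 * (1 + \<sigma> * d1)) (l2 * (1 + \<sigma> * d2)) - \<phi> l1 l2\<bar> < e"
    using d1(3) d2(3) by linarith
  with d1 d2 show ?thesis by auto
qed

lemma tendsto_exp_substitution:
  fixes \<Phi> :: "real \<Rightarrow> real \<Rightarrow> real \<Rightarrow> real" and \<phi> :: "real \<Rightarrow> real \<Rightarrow> real"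
    and kk1 kk2 :: "real \<Rightarrow> real \<Rightarrow> real" and k1 k2 :: "real \<Rightarrow> real"
  assumes antimono: "eventually (\<lambda>t. \<forall>s1 s1' s2 s2'. 0 \<le> s1 \<longrightarrow> s1 \<le> s1' \<longrightarrow> s1' \<le> 1 \<longrightarrow>
        0 \<le> s2 \<longrightarrow> s2 \<le> s2' \<longrightarrow> s2' \<le> 1 \<longrightarrow> \<Phi> t s1' s2' \<le> \<Phi> t s1 s2) at_top"
    and equiv1: "\<forall>mu>0. (\<lambda>t. kk1 mu t) \<sim>[at_top] (\<lambda>t. mu * k1 t)"
    and equiv2: "\<forall>mu>0. (\<lambda>t. kk2 mu t) \<sim>[at_top] (\<lambda>t. mu * k2 t)"
    and k1: "(k1 \<longlongrightarrow> 0) at_top" "eventually (\<lambda>t. 0 \<le> k1 t) at_top"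
    and k2: "(k2 \<longlongrightarrow> 0) at_top" "eventually (\<lambda>t. 0 \<le> k2 t) at_top"
    and lim: "\<forall>mu1>0. \<forall>mu2>0. ((\<lambda>t. \<Phi> t (1 - kk1 mu1 t) (1 - kk2 mu2 t)) \<longlongrightarrow> \<phi> mu1 mu2) at_top"
    and cont1: "\<forall>mu2>0. continuous_on {0<..} (\<lambda>mu1. \<phi> mu1 mu2)"
    and cont2: "\<forall>mu1>0. continuous_on {0<..} (\<lambda>mu2. \<phi> mu1 mu2)"
    and l: "0 < l1" "0 < l2"
  shows "((\<lambda>t. \<Phi> t (exp (- l1 * k1 t)) (exp (- l2 * k2 t))) \<longlongrightarrow> \<phi> l1 l2) at_top"
proof (rule order_tendstoI)
  fix a assume "a < \<phi> l1 l2"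
  then obtain d1 d2 where d: "0 < d1" "d1 \<le> 1/2" "0 < d2" "d2 \<le> 1/2"
    and close: "\<bar>\<phi> (l1 * (1 - d1)) (l2 * (1 - d2)) - \<phi> l1 l2\<bar> < \<phi> l1 l2 - a"
    using separately_continuous_scaled_close[OF cont1 cont2 l, where e="\<phi> l1 l2 - a" and \<sigma>="-1"]
    by auto
  have "eventually (\<lambda>t. a < \<Phi> t (1 - kk1 (l1 * (1 - d1)) t) (1 - kk2 (l2 * (1 - d2)) t)) at_top"
    using lim l d close by (intro order_tendstoD(1)[where y="\<phi> (l1 * (1 - d1)) (l2 * (1 - d2))"]) auto
  moreover note eventually_one_minus_bracket_exp[OF equiv1 k1 l(1) d(1,2)]
    eventually_one_minus_bracket_exp[OF equiv2 k2 l(2) d(3,4)]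
  ultimately show "eventually (\<lambda>t. a < \<Phi> t (exp (- l1 * k1 t)) (exp (- l2 * k2 t))) at_top"
    using antimono
  proof eventually_elim
    case (elim t)
    then have "\<Phi> t (1 - kk1 (l1 * (1 - d1)) t) (1 - kk2 (l2 * (1 - d2)) t)
        \<le> \<Phi> t (exp (- l1 * k1 t)) (exp (- l2 * k2 t))"
      by simp
    with elim(1) show ?case by linarith
  qed
next
  fix a assume "\<phi> l1 l2 < a"
  then obtain d1 d2 where d: "0 < d1" "d1 \<le> 1/2" "0 < d2" "d2 \<le> 1/2"
    and close: "\<bar>\<phi> (l1 * (1 + d1)) (l2 * (1 + d2)) - \<phi> l1 l2\<bar> < a - \<phi> l1 l2"
    using separately_continuous_scaled_close[OF cont1 cont2 l, where e="a - \<phi> l1 l2" and \<sigma>=1]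
    by auto
  have "eventually (\<lambda>t. \<Phi> t (1 - kk1 (l1 * (1 + d1)) t) (1 - kk2 (l2 * (1 + d2)) t) < a) at_top"
    using lim l d close by (intro order_tendstoD(2)[where y="\<phi> (l1 * (1 + d1)) (l2 * (1 + d2))"]) auto
  moreover note eventually_one_minus_bracket_exp[OF equiv1 k1 l(1) d(1,2)]
    eventually_one_minus_bracket_exp[OF equiv2 k2 l(2) d(3,4)]
  ultimately show "eventually (\<lambda>t. \<Phi> t (exp (- l1 * k1 t)) (exp (- l2 * k2 t)) < a) at_top"
    using antimono
  proof eventually_elim
    case (elim t)
    then have "exp (- l1 * k1 t) \<le> 1" "exp (- l2 * k2 t) \<le> 1" by (auto simp del: exp_le_one_iff)
    with elim have "\<Phi> t (exp (- l1 * k1 t)) (exp (- l2 * k2 t))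
        \<le> \<Phi> t (1 - kk1 (l1 * (1 + d1)) t) (1 - kk2 (l2 * (1 + d2)) t)"
      by simp
    with elim(1) show ?case by linarith
  qed
qed

lemma tendsto_Qv_exp_substitution:
  fixes Z :: "nat \<Rightarrow> real \<Rightarrow> (nat \<times> nat) pmf" and H k1 k2 :: "real \<Rightarrow> real"
    and kk1 kk2 :: "real \<Rightarrow> real \<Rightarrow> real" and h :: "real \<Rightarrow> real \<Rightarrow> real \<times> real"
  assumes H: "eventually (\<lambda>t. 0 \<le> H t) at_top"
    and equiv1: "\<forall>mu>0. (\<lambda>t. kk1 mu t) \<sim>[at_top] (\<lambda>t. mu * k1 t)"
    and equiv2: "\<forall>mu>0. (\<lambda>t. kk2 mu t) \<sim>[at_top] (\<lambda>t. mu * k2 t)"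
    and k1: "(k1 \<longlongrightarrow> 0) at_top" "eventually (\<lambda>t. 0 \<le> k1 t) at_top"
    and k2: "(k2 \<longlongrightarrow> 0) at_top" "eventually (\<lambda>t. 0 \<le> k2 t) at_top"
    and lim: "\<forall>mu1>0. \<forall>mu2>0.
      ((\<lambda>t. H t *\<^sub>R Qv Z t (1 - kk1 mu1 t) (1 - kk2 mu2 t)) \<longlongrightarrow> h mu1 mu2) at_top"
    and cont1: "\<forall>mu2>0. continuous_on {0<..} (\<lambda>mu1. fst (h mu1 mu2))"
      "\<forall>mu2>0. continuous_on {0<..} (\<lambda>mu1. snd (h mu1 mu2))"
    and cont2: "\<forall>mu1>0. continuous_on {0<..} (\<lambda>mu2. fst (h mu1 mu2))"
      "\<forall>mu1>0. continuous_on {0<..} (\<lambda>mu2. snd (h mu1 mu2))"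
    and l: "0 < l1" "0 < l2"
  shows "((\<lambda>t. H t *\<^sub>R Qv Z t (exp (- l1 * k1 t)) (exp (- l2 * k2 t))) \<longlongrightarrow> h l1 l2) at_top"
proof -
  have Qv_scaled: "H t *\<^sub>R Qv Z t s1 s2 = (H t * (1 - pgf2 (Z 1 t) s1 s2), H t * (1 - pgf2 (Z 2 t) s1 s2))"
    for t s1 s2 by (simp add: Qv_def)
  have component: "((\<lambda>t. H t * (1 - pgf2 (Z i t) (exp (- l1 * k1 t)) (exp (- l2 * k2 t)))) \<longlongrightarrow> c l1 l2) at_top"
    if lim_c: "\<forall>mu1>0. \<forall>mu2>0.
        ((\<lambda>t. H t * (1 - pgf2 (Z i t) (1 - kk1 mu1 t) (1 - kk2 mu2 t))) \<longlongrightarrow> c mu1 mu2) at_top"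
      and "\<forall>mu2>0. continuous_on {0<..} (\<lambda>mu1. c mu1 mu2)"
      and "\<forall>mu1>0. continuous_on {0<..} (\<lambda>mu2. c mu1 mu2)"
    for i and c :: "real \<Rightarrow> real \<Rightarrow> real"
  proof (rule tendsto_exp_substitution[OF _ equiv1 equiv2 k1 k2 lim_c that(2,3) l])
    show "eventually (\<lambda>t. \<forall>s1 s1' s2 s2'. 0 \<le> s1 \<longrightarrow> s1 \<le> s1' \<longrightarrow> s1' \<le> 1 \<longrightarrow>
        0 \<le> s2 \<longrightarrow> s2 \<le> s2' \<longrightarrow> s2' \<le> 1 \<longrightarrow>
        H t * (1 - pgf2 (Z i t) s1' s2') \<le> H t * (1 - pgf2 (Z i t) s1 s2)) at_top"
      using H by eventually_elim (auto intro!: mult_left_mono pgf2_mono)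
  qed
  have lim_components:
    "((\<lambda>t. H t * (1 - pgf2 (Z 1 t) (1 - kk1 mu1 t) (1 - kk2 mu2 t))) \<longlongrightarrow> fst (h mu1 mu2)) at_top"
    "((\<lambda>t. H t * (1 - pgf2 (Z 2 t) (1 - kk1 mu1 t) (1 - kk2 mu2 t))) \<longlongrightarrow> snd (h mu1 mu2)) at_top"
    if "0 < mu1" "0 < mu2" for mu1 mu2
    using tendsto_fst[OF lim[rule_format, OF that]] tendsto_snd[OF lim[rule_format, OF that]]
    by (simp_all add: Qv_scaled)
  have "((\<lambda>t. H t * (1 - pgf2 (Z 1 t) (exp (- l1 * k1 t)) (exp (- l2 * k2 t)))) \<longlongrightarrow> fst (h l1 l2)) at_top"
    by (rule component[where c="\<lambda>a b. fst (h a b)"]) (use lim_components(1) cont1(1) cont2(1) in auto)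
  moreover have "((\<lambda>t. H t * (1 - pgf2 (Z 2 t) (exp (- l1 * k1 t)) (exp (- l2 * k2 t)))) \<longlongrightarrow> snd (h l1 l2)) at_top"
    by (rule component[where c="\<lambda>a b. snd (h a b)"]) (use lim_components(2) cont1(2) cont2(2) in auto)
  ultimately show ?thesis
    unfolding Qv_scaled using tendsto_Pair[where a="fst (h l1 l2)" and b="snd (h l1 l2)"] by simp
qed

theorem lemma6:
  fixes G :: "nat \<Rightarrow> real measure" and xi :: "nat \<Rightarrow> (nat \<times> nat) pmf"
    and Z :: "nat \<Rightarrow> real \<Rightarrow> (nat \<times> nat) pmf"
    and H k1 k2 :: "real \<Rightarrow> real"
    and kk1 kk2 :: "real \<Rightarrow> real \<Rightarrow> real"
    and h :: "real \<Rightarrow> real \<Rightarrow> real \<times> real"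
    and g :: "real \<Rightarrow> real \<times> real"
  assumes BH: "bellman_harris G xi Z"
    and H_nonneg: "\<And>t. t \<ge> 0 \<Longrightarrow> H t \<ge> 0"
    and k1_nonneg: "\<And>t. t \<ge> 0 \<Longrightarrow> k1 t \<ge> 0"
    and k2_nonneg: "\<And>t. t \<ge> 0 \<Longrightarrow> k2 t \<ge> 0"
    and k1_lim: "(k1 \<longlongrightarrow> 0) at_top"
    and k2_lim: "(k2 \<longlongrightarrow> 0) at_top"
    and H_lim: "filterlim H at_top at_top"
  shows
    "((\<forall>lam1>0. (\<lambda>t. kk1 lam1 t) \<sim>[at_top] (\<lambda>t. lam1 * k1 t)) \<and>
      (\<forall>lam2>0. (\<lambda>t. kk2 lam2 t) \<sim>[at_top] (\<lambda>t. lam2 * k2 t)) \<and>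
      (\<forall>lam1>0. \<forall>lam2>0. ((\<lambda>t. H t *\<^sub>R Qv Z t (1 - kk1 lam1 t) (1 - kk2 lam2 t))
                              \<longlongrightarrow> h lam1 lam2) at_top) \<and>
      (\<forall>lam2>0. continuous_on {0<..} (\<lambda>lam1. fst (h lam1 lam2))) \<and>
      (\<forall>lam2>0. continuous_on {0<..} (\<lambda>lam1. snd (h lam1 lam2))) \<and>
      (\<forall>lam1>0. continuous_on {0<..} (\<lambda>lam2. fst (h lam1 lam2))) \<and>
      (\<forall>lam1>0. continuous_on {0<..} (\<lambda>lam2. snd (h lam1 lam2)))
      \<longrightarrow> (\<forall>lam1>0. \<forall>lam2>0.
             ((\<lambda>t. H t *\<^sub>R Qv Z t (exp (- lam1 * k1 t)) (exp (- lam2 * k2 t)))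
                \<longlongrightarrow> h lam1 lam2) at_top))
     \<and>
     ((\<forall>lam2>0. (\<lambda>t. kk2 lam2 t) \<sim>[at_top] (\<lambda>t. lam2 * k2 t)) \<and>
      (\<forall>lam2>0. ((\<lambda>t. H t *\<^sub>R Qv Z t 1 (1 - kk2 lam2 t)) \<longlongrightarrow> g lam2) at_top) \<and>
      continuous_on {0<..} (\<lambda>lam2. fst (g lam2)) \<and>
      continuous_on {0<..} (\<lambda>lam2. snd (g lam2))
      \<longrightarrow> (\<forall>lam2>0.
             ((\<lambda>t. H t *\<^sub>R Qv Z t 1 (exp (- lam2 * k2 t))) \<longlongrightarrow> g lam2) at_top))"
proof -
  have eventually_nonneg: "eventually (\<lambda>t. 0 \<le> f t) at_top" if "\<And>t. t \<ge> 0 \<Longrightarrow> f t \<ge> 0" for f :: "real \<Rightarrow> real"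
    using eventually_ge_at_top[of 0] by eventually_elim (rule that)
  note nonneg = eventually_nonneg[OF H_nonneg] eventually_nonneg[OF k1_nonneg] eventually_nonneg[OF k2_nonneg]
  show ?thesis
  proof (intro conjI impI allI, goal_cases)
    case (1 lam1 lam2)
    then show ?case
      by (intro tendsto_Qv_exp_substitution[OF nonneg(1) _ _ k1_lim nonneg(2) k2_lim nonneg(3)]) auto
  next
    case (2 lam2)
    (* part (b) is part (a) with k1 = kk1 = 0 and lam1 = 1 *)
    then have "((\<lambda>t. H t *\<^sub>R Qv Z t (exp (- 1 * 0)) (exp (- lam2 * k2 t))) \<longlongrightarrow> g lam2) at_top"
      by (intro tendsto_Qv_exp_substitution[where ?kk1.0 = "\<lambda>_ _. 0" and ?k1.0 = "\<lambda>_. 0" and h = "\<lambda>_. g",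
            OF nonneg(1) _ _ _ _ k2_lim nonneg(3)]) auto
    then show ?case by simp
  qed
qed

end
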